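(* Let $\varepsilon>0$, and let $\gamma\in C([0,1])\cap C^1((0,1))$ satisfy $\gamma(0)=\gamma(1)=0$ and $\gamma(t)>0$ for $t\in(0,1)$. Let $c(t):=\dot\gamma(t)-\varepsilon/\gamma(t)$ for $t\in(0,1)$. Suppose: - the improper integral $\int_0^1 \frac{1}{\gamma(t)}\,\mathrm dt$ is finite, and - the product $\dot\gamma(t)\gamma(t)$ has a (unique) continuous extension to $[0,1]$. Then there exists a strictly increasing, bijective, continuously differentiable time change $\theta:[0,1]\to[0,1]$ such that the function $$\hat c(t):=c(\theta(t))\dot\theta(t)=\Big(\dot\gamma(\theta(t))-\frac{\varepsilon}{\gamma(\theta(t))}\Big)\dot\theta(t),$$ defined for $t\in(0,1)$, has a continuous extension to $[0,1]$. *)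

theory Defs
  imports "HOL-Analysis.Analysis"
begin

definition improper_integral_converges :: "(real \<Rightarrow> real) \<Rightarrow> real \<Rightarrow> real \<Rightarrow> bool" where
  "improper_integral_converges f a b \<longleftrightarrow>
     (\<exists>I. ((\<lambda>(x, y). integral {x..y} f) \<longlongrightarrow> I) (at_right a \<times>\<^sub>F at_left b))"

end

theory Submission
  imports Defs "HOL-Real_Asymp.Real_Asymp"
begin

text \<open>Reparametrise by the inverse \<open>\<theta>\<close> of \<open>s(x) = L\<^sup>-\<^sup>1 \<integral>\<^sub>0\<^sup>x 1/\<gamma>\<close>, where
  \<open>L = \<integral>\<^sub>0\<^sup>1 1/\<gamma>\<close> is finite because the improper integral of the positive function \<open>1/\<gamma>\<close>
  converges. Then \<open>\<theta>' = L (\<gamma> \<circ> \<theta>)\<close>, which is continuous on \<open>[0,1]\<close>, and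
  \<open>(\<gamma>' \<circ> \<theta> - \<epsilon> / (\<gamma> \<circ> \<theta>)) \<theta>' = L (\<gamma>' \<gamma> - \<epsilon>) \<circ> \<theta>\<close>, which extends continuously because
  \<open>\<gamma>' \<gamma>\<close> does. Neither the sign of \<open>\<epsilon>\<close>, nor the boundary values of \<open>\<gamma>\<close>, nor the fact that
  \<open>\<gamma>'\<close> is the derivative of \<open>\<gamma>\<close> is needed.\<close>

lemma has_real_derivative_within_Icc_of_continuous_derivative:
  fixes \<phi> \<psi> :: "real \<Rightarrow> real"
  assumes \<phi>: "continuous_on {a..b} \<phi>"
    and der: "\<And>x. x \<in> {a<..<b} \<Longrightarrow> (\<phi> has_real_derivative \<psi> x) (at x)"
    and \<psi>: "continuous_on {a..b} \<psi>" and x: "x \<in> {a..b}"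
  shows "(\<phi> has_real_derivative \<psi> x) (at x within {a..b})"
proof -
  have primitive: "\<phi> a + integral {a..y} \<psi> = \<phi> y" if y: "y \<in> {a..b}" for y
  proof -
    have "(\<psi> has_integral \<phi> y - \<phi> a) {a..y}"
    proof (rule fundamental_theorem_of_calculus_interior)
      show "continuous_on {a..y} \<phi>"
        using y by (auto intro: continuous_on_subset[OF \<phi>])
      show "(\<phi> has_vector_derivative \<psi> z) (at z)" if "z \<in> {a<..<y}" for z
        using der[of z] that y by (simp add: has_real_derivative_iff_has_vector_derivative)
    qed (use y in auto)
    then show ?thesis by (simp add: integral_unique)
  qed
  have "((\<lambda>y. \<phi> a + integral {a..y} \<psi>) has_real_derivative \<psi> x) (at x within {a..b})"
    using integral_has_real_derivative[OF \<psi> x] by (auto intro: derivative_eq_intros)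
  then show ?thesis
    by (rule has_field_derivative_transform_within[OF _ zero_less_one x]) (simp add: primitive)
qed

lemma improper_integral_converges_imp_integrable:
  fixes f :: "real \<Rightarrow> real"
  assumes "a < b"
    and int: "\<And>x y. a < x \<Longrightarrow> y < b \<Longrightarrow> f integrable_on {x..y}"
    and nonneg: "\<And>t. t \<in> {a<..<b} \<Longrightarrow> f t \<ge> 0"
    and conv: "improper_integral_converges f a b"
  shows "f integrable_on {a..b}"
proof -
  obtain I where I: "((\<lambda>(x, y). integral {x..y} f) \<longlongrightarrow> I) (at_right a \<times>\<^sub>F at_left b)"
    using conv unfolding improper_integral_converges_def by blast
  define l :: "nat \<Rightarrow> real" where "l k = a + (b - a) / (real k + 2)" for k
  define u :: "nat \<Rightarrow> real" where "u k = b - (b - a) / (real k + 2)" for k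
  define g where "g k t = (if t \<in> {l k..u k} then f t else 0)" for k t
  have lu: "a < l k" "u k < b" for k
    using \<open>a < b\<close> by (auto simp: l_def u_def)
  have sub: "{l k..u k} \<subseteq> {a<..<b}" for k
    using lu[of k] by auto
  have g_int: "g k integrable_on {a<..<b}" for k
    unfolding g_def integrable_restrict_Int Int_absorb2[OF sub] using int lu by blast
  have g_integral: "integral {a<..<b} (g k) = integral {l k..u k} f" for k
    unfolding g_def Henstock_Kurzweil_Integration.integral_restrict_Int Int_absorb2[OF sub] ..
  have lu_mono: "l (Suc k) \<le> l k" "u k \<le> u (Suc k)" for k
    using \<open>a < b\<close> by (auto simp: l_def u_def field_simps)
  have g_mono: "g k t \<le> g (Suc k) t" if "t \<in> {a<..<b}" for k t
    using nonneg[OF that] lu_mono[of k] by (auto simp: g_def)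
  have l_lim: "l \<longlonglongrightarrow> a" and u_lim: "u \<longlonglongrightarrow> b"
    unfolding l_def u_def by real_asymp+
  have g_lim: "(\<lambda>k. g k t) \<longlonglongrightarrow> f t" if t: "t \<in> {a<..<b}" for t
  proof (rule tendsto_eventually)
    have "eventually (\<lambda>k. l k < t) sequentially" "eventually (\<lambda>k. t < u k) sequentially"
      using order_tendstoD(2)[OF l_lim] order_tendstoD(1)[OF u_lim] t by auto
    then show "eventually (\<lambda>k. g k t = f t) sequentially"
      by eventually_elim (auto simp: g_def)
  qed
  have "filterlim (\<lambda>k. (l k, u k)) (at_right a \<times>\<^sub>F at_left b) sequentially"
    using l_lim u_lim lu
    by (intro filterlim_Pair tendsto_imp_filterlim_at_right tendsto_imp_filterlim_at_left) auto
  from filterlim_compose[OF I this]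
  have "(\<lambda>k. integral {a<..<b} (g k)) \<longlonglongrightarrow> I"
    by (simp add: g_integral)
  then have "bounded (range (\<lambda>k. integral {a<..<b} (g k)))"
    by (rule convergent_imp_bounded)
  then have "f integrable_on {a<..<b}"
    using monotone_convergence_increasing[of g "{a<..<b}" f] g_int g_mono g_lim by blast
  then show ?thesis
    by (simp add: integrable_on_Icc_iff_Ioo)
qed

lemma strict_mono_on_image_Icc:
  fixes s :: "real \<Rightarrow> real"
  assumes "a \<le> b" and cont: "continuous_on {a..b} s" and mono: "strict_mono_on {a..b} s"
  shows "s ` {a..b} = {s a..s b}"
proof
  show "s ` {a..b} \<subseteq> {s a..s b}"
    using \<open>a \<le> b\<close> by (auto intro!: strict_mono_on_leD[OF mono])
  show "{s a..s b} \<subseteq> s ` {a..b}"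
  proof
    fix y assume "y \<in> {s a..s b}"
    then obtain x where "a \<le> x" "x \<le> b" "s x = y"
      using IVT'[of s a y b] \<open>a \<le> b\<close> cont by auto
    then show "y \<in> s ` {a..b}" by auto
  qed
qed

lemma strict_mono_on_the_inv_into:
  fixes s :: "'a::linorder \<Rightarrow> 'b::linorder"
  assumes mono: "strict_mono_on A s"
  shows "strict_mono_on (s ` A) (the_inv_into A s)"
proof (rule strict_mono_onI)
  fix y z assume "y \<in> s ` A" "z \<in> s ` A" "y < z"
  then obtain x x' where "x \<in> A" "x' \<in> A" "y = s x" "z = s x'" "s x < s x'"
    by blast
  then show "the_inv_into A s y < the_inv_into A s z"
    using the_inv_into_f_f[OF strict_mono_on_imp_inj_on[OF mono]] strict_mono_on_less[OF mono]
    by auto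
qed

lemma the_inv_into_Icc_continuous_strict_mono:
  fixes s :: "real \<Rightarrow> real"
  assumes "a \<le> b" and cont: "continuous_on {a..b} s" and mono: "strict_mono_on {a..b} s"
  shows "strict_mono_on {s a..s b} (the_inv_into {a..b} s)"
    and "bij_betw (the_inv_into {a..b} s) {s a..s b} {a..b}"
    and "continuous_on {s a..s b} (the_inv_into {a..b} s)"
proof -
  have img: "s ` {a..b} = {s a..s b}"
    by (rule strict_mono_on_image_Icc[OF \<open>a \<le> b\<close> cont mono])
  have inj: "inj_on s {a..b}"
    by (rule strict_mono_on_imp_inj_on[OF mono])
  show "strict_mono_on {s a..s b} (the_inv_into {a..b} s)"
    using strict_mono_on_the_inv_into[OF mono] by (simp add: img)
  show "bij_betw (the_inv_into {a..b} s) {s a..s b} {a..b}"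
    using bij_betw_the_inv_into[of s "{a..b}" "{s a..s b}"] inj img by (simp add: bij_betw_def)
  show "continuous_on {s a..s b} (the_inv_into {a..b} s)"
    using continuous_on_inv[OF cont compact_Icc] the_inv_into_f_f[OF inj] img by simp
qed

lemma integral_has_real_derivative_at_interior:
  fixes f :: "real \<Rightarrow> real"
  assumes f: "f integrable_on {a..b}" and x: "x \<in> {a<..<b}" and "isCont f x"
  shows "((\<lambda>u. integral {a..u} f) has_real_derivative f x) (at x)"
proof -
  have "((\<lambda>u. integral {a..u} f) has_vector_derivative f x) (at x within {a..b})"
    using integral_has_vector_derivative_continuous_at[of f a b x "{}"] assms
    by (simp add: continuous_at_imp_continuous_at_within)
  then show ?thesis
    using x by (simp add: at_within_Icc_at has_real_derivative_iff_has_vector_derivative)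
qed

lemma indefinite_integral_strict_mono_on:
  fixes f :: "real \<Rightarrow> real"
  assumes f: "f integrable_on {a..b}" and cont: "continuous_on {a<..<b} f"
    and pos: "\<And>t. t \<in> {a<..<b} \<Longrightarrow> f t > 0"
  shows "strict_mono_on {a..b} (\<lambda>x. integral {a..x} f)"
proof (rule strict_mono_onI)
  fix x y assume xy: "x \<in> {a..b}" "y \<in> {a..b}" "x < y"
  show "integral {a..x} f < integral {a..y} f"
  proof (rule DERIV_pos_imp_increasing_open[OF \<open>x < y\<close>])
    show "continuous_on {x..y} (\<lambda>x. integral {a..x} f)"
      using xy by (auto intro: continuous_on_subset[OF indefinite_integral_continuous_1[OF f]])
    fix z assume "x < z" "z < y"
    then have z: "z \<in> {a<..<b}" using xy by auto
    then have "isCont f z"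
      using cont by (simp add: continuous_on_eq_continuous_at)
    then show "\<exists>d. ((\<lambda>x. integral {a..x} f) has_real_derivative d) (at z) \<and> d > 0"
      using integral_has_real_derivative_at_interior[OF f z] pos[OF z] by blast
  qed
qed

lemma time_change_from_density:
  fixes f :: "real \<Rightarrow> real"
  assumes f: "f integrable_on {0..1}" and cont: "continuous_on {0<..<1} f"
    and pos: "\<And>t. t \<in> {0<..<1} \<Longrightarrow> f t > 0"
  obtains \<theta> L where "strict_mono_on {0..1} \<theta>" "bij_betw \<theta> {0..1} {0..1}"
    "continuous_on {0..1} \<theta>" "\<theta> ` {0<..<1} \<subseteq> {0<..<1}"
    "\<And>t. t \<in> {0<..<1} \<Longrightarrow> (\<theta> has_real_derivative L / f (\<theta> t)) (at t)"
proof -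
  define L where "L = integral {0..1} f"
  define s where "s x = integral {0..x} f / L" for x
  have F_mono: "strict_mono_on {0..1} (\<lambda>x. integral {0..x} f)"
    by (rule indefinite_integral_strict_mono_on[OF f cont pos])
  then have "L > 0"
    using strict_mono_onD[OF F_mono, of 0 1] by (simp add: L_def)
  have s_mono: "strict_mono_on {0..1} s"
    using F_mono \<open>L > 0\<close> by (auto simp: strict_mono_on_def s_def divide_strict_right_mono)
  have s_cont: "continuous_on {0..1} s"
    unfolding s_def using \<open>L > 0\<close> by (intro continuous_intros indefinite_integral_continuous_1 f) auto
  have s_01: "s 0 = 0" "s 1 = 1"
    using \<open>L > 0\<close> by (simp_all add: s_def L_def)
  define \<theta> where "\<theta> = the_inv_into {0..1} s"
  have \<theta>_mono: "strict_mono_on {0..1} \<theta>"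
    and \<theta>_bij: "bij_betw \<theta> {0..1} {0..1}" and \<theta>_cont: "continuous_on {0..1} \<theta>"
    using the_inv_into_Icc_continuous_strict_mono[OF _ s_cont s_mono] by (simp_all add: \<theta>_def s_01)
  have s_inj: "inj_on s {0..1}"
    by (rule strict_mono_on_imp_inj_on[OF s_mono])
  have s_\<theta>: "s (\<theta> t) = t" if "t \<in> {0..1}" for t
    using f_the_inv_into_f[OF s_inj] strict_mono_on_image_Icc[OF _ s_cont s_mono] that
    by (simp add: \<theta>_def s_01)
  have "\<theta> 0 = 0" "\<theta> 1 = 1"
    using the_inv_into_f_f[OF s_inj, of 0] the_inv_into_f_f[OF s_inj, of 1] by (simp_all add: \<theta>_def s_01)
  then have \<theta>_open: "\<theta> ` {0<..<1} \<subseteq> {0<..<1}"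
    using strict_mono_onD[OF \<theta>_mono, of 0] strict_mono_onD[OF \<theta>_mono, of _ 1] by force
  have "(\<theta> has_real_derivative L / f (\<theta> t)) (at t)" if t: "t \<in> {0<..<1}" for t
  proof -
    have \<theta>t: "\<theta> t \<in> {0<..<1}"
      using \<theta>_open t by blast
    then have "isCont f (\<theta> t)"
      using cont by (simp add: continuous_on_eq_continuous_at)
    then have "(s has_real_derivative f (\<theta> t) / L) (at (\<theta> t))"
      unfolding s_def[abs_def] by (intro DERIV_cdivide integral_has_real_derivative_at_interior[OF f \<theta>t])
    then have "(\<theta> has_real_derivative inverse (f (\<theta> t) / L)) (at t)"
      by (rule DERIV_inverse_function[where a=0 and b=1])
        (use t pos[OF \<theta>t] \<open>L > 0\<close> s_\<theta> continuous_on_interior[OF \<theta>_cont] in auto)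
    then show ?thesis by simp
  qed
  then show ?thesis
    by (rule that[OF \<theta>_mono \<theta>_bij \<theta>_cont \<theta>_open])
qed

lemma time_change_with_speed:
  fixes \<gamma> :: "real \<Rightarrow> real"
  assumes cont: "continuous_on {0..1} \<gamma>" and pos: "\<And>t. t \<in> {0<..<1} \<Longrightarrow> \<gamma> t > 0"
    and integ: "improper_integral_converges (\<lambda>t. 1 / \<gamma> t) 0 1"
  obtains \<theta> L where "strict_mono_on {0..1} \<theta>" "bij_betw \<theta> {0..1} {0..1}"
    "\<theta> ` {0<..<1} \<subseteq> {0<..<1}" "continuous_on {0..1} \<theta>"
    "\<And>t. t \<in> {0..1} \<Longrightarrow> (\<theta> has_real_derivative L * \<gamma> (\<theta> t)) (at t within {0..1})"
proof -
  define f where "f t = 1 / \<gamma> t" for t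
  have f_cont: "continuous_on {0<..<1} f"
    unfolding f_def using pos by (intro continuous_intros continuous_on_subset[OF cont]) force+
  have f_pos: "\<And>t. t \<in> {0<..<1} \<Longrightarrow> f t > 0"
    using pos by (simp add: f_def)
  have f_int: "f integrable_on {0..1}"
  proof (rule improper_integral_converges_imp_integrable)
    show "f integrable_on {x..y}" if "0 < x" "y < 1" for x y
      using that by (intro integrable_continuous_interval continuous_on_subset[OF f_cont]) auto
    show "f t \<ge> 0" if "t \<in> {0<..<1}" for t
      using f_pos[OF that] by simp
    show "improper_integral_converges f 0 1"
      using integ by (simp add: f_def[abs_def])
  qed simp
  obtain \<theta> L where \<theta>_mono: "strict_mono_on {0..1} \<theta>"
    and \<theta>_bij: "bij_betw \<theta> {0..1} {0..1}" and \<theta>_cont: "continuous_on {0..1} \<theta>"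
    and \<theta>_open: "\<theta> ` {0<..<1} \<subseteq> {0<..<1}"
    and \<theta>_der: "\<And>t. t \<in> {0<..<1} \<Longrightarrow> (\<theta> has_real_derivative L / f (\<theta> t)) (at t)"
    using time_change_from_density[OF f_int f_cont f_pos] by blast
  have speed_cont: "continuous_on {0..1} (\<lambda>t. L * \<gamma> (\<theta> t))"
    using \<theta>_bij by (intro continuous_intros continuous_on_compose2[OF cont \<theta>_cont]) (auto simp: bij_betw_def)
  have "(\<theta> has_real_derivative L * \<gamma> (\<theta> t)) (at t within {0..1})" if "t \<in> {0..1}" for t
  proof (rule has_real_derivative_within_Icc_of_continuous_derivative[OF \<theta>_cont _ speed_cont that])
    show "(\<theta> has_real_derivative L * \<gamma> (\<theta> t)) (at t)" if "t \<in> {0<..<1}" for t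
      using \<theta>_der[OF that] by (simp add: f_def)
  qed
  then show ?thesis
    by (rule that[OF \<theta>_mono \<theta>_bij \<theta>_open \<theta>_cont])
qed

theorem lemma4p1:
  fixes \<epsilon> :: real and \<gamma> \<gamma>' :: "real \<Rightarrow> real"
  assumes eps: "\<epsilon> > 0"
    and cont: "continuous_on {0..1} \<gamma>"
    and deriv: "\<And>t. t \<in> {0<..<1} \<Longrightarrow> (\<gamma> has_real_derivative \<gamma>' t) (at t)"
    and deriv_cont: "continuous_on {0<..<1} \<gamma>'"
    and ends: "\<gamma> 0 = 0" "\<gamma> 1 = 0"
    and pos: "\<And>t. t \<in> {0<..<1} \<Longrightarrow> \<gamma> t > 0"
    and integ: "improper_integral_converges (\<lambda>t. 1 / \<gamma> t) 0 1"
    and ext: "\<exists>g. continuous_on {0..1} g \<and> (\<forall>t\<in>{0<..<1}. g t = \<gamma>' t * \<gamma> t)"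
  shows "\<exists>\<theta> \<theta>'. strict_mono_on {0..1} \<theta> \<and> bij_betw \<theta> {0..1} {0..1}
          \<and> (\<forall>t\<in>{0..1}. (\<theta> has_real_derivative \<theta>' t) (at t within {0..1}))
          \<and> continuous_on {0..1} \<theta>'
          \<and> (\<exists>h. continuous_on {0..1} h \<and>
               (\<forall>t\<in>{0<..<1}. h t = (\<gamma>' (\<theta> t) - \<epsilon> / \<gamma> (\<theta> t)) * \<theta>' t))"
proof -
  obtain g where g_cont: "continuous_on {0..1} g" and g: "\<And>t. t \<in> {0<..<1} \<Longrightarrow> g t = \<gamma>' t * \<gamma> t"
    using ext by blast
  obtain \<theta> L where \<theta>_mono: "strict_mono_on {0..1} \<theta>" and \<theta>_bij: "bij_betw \<theta> {0..1} {0..1}"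
    and \<theta>_open: "\<theta> ` {0<..<1} \<subseteq> {0<..<1}" and \<theta>_cont: "continuous_on {0..1} \<theta>"
    and \<theta>_der: "\<And>t. t \<in> {0..1} \<Longrightarrow> (\<theta> has_real_derivative L * \<gamma> (\<theta> t)) (at t within {0..1})"
    using time_change_with_speed[OF cont pos integ] by blast
  have \<theta>_range: "\<theta> ` {0..1} \<subseteq> {0..1}"
    using \<theta>_bij by (simp add: bij_betw_def)
  define \<theta>' where "\<theta>' t = L * \<gamma> (\<theta> t)" for t
  define h where "h t = L * (g (\<theta> t) - \<epsilon>)" for t
  have \<theta>'_cont: "continuous_on {0..1} \<theta>'"
    unfolding \<theta>'_def using \<theta>_range by (intro continuous_intros continuous_on_compose2[OF cont \<theta>_cont])
  have h_cont: "continuous_on {0..1} h"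
    unfolding h_def using \<theta>_range by (intro continuous_intros continuous_on_compose2[OF g_cont \<theta>_cont])
  have h_eq: "h t = (\<gamma>' (\<theta> t) - \<epsilon> / \<gamma> (\<theta> t)) * \<theta>' t" if "t \<in> {0<..<1}" for t
  proof -
    have "\<theta> t \<in> {0<..<1}"
      using \<theta>_open that by blast
    then show ?thesis
      using g pos[of "\<theta> t"] by (simp add: h_def \<theta>'_def field_simps)
  qed
  show ?thesis
    by (rule exI[of _ \<theta>], rule exI[of _ \<theta>'],
        intro conjI exI[of _ h] ballI \<theta>_mono \<theta>_bij \<theta>'_cont h_cont h_eq)
      (auto simp: \<theta>_der \<theta>'_def)
qed

end
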